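(* Let $\mathcal S=(\mathcal M,X,\bot)$ be an accessible concurrent system. Then $\mathcal S$ is irreducible if and only if $\mathcal S$ has the spectral property, i.e. for every letter $a$ of the base alphabet $\Sigma$ of $\mathcal M$, the characteristic root $r^a$ of the concurrent system $(\mathcal M^a,X,\bot)$ satisfies $r^a>r$, where $r$ is the characteristic root of $\mathcal S$.
   Context: A trace monoid $\mathcal M=\mathcal M(\Sigma,I)$ is the monoid presented by $\langle\Sigma\mid ab=ba \text{ for all }(a,b)\in I\rangle$, where $\Sigma$ is a finite alphabet and $I\subseteq\Sigma\times\Sigma$ is irreflexive and symmetric; its elements are called traces, $\varepsilon$ is the unit, and $|x|$ is the length of a trace $x$. Let $D=(\Sigma\times\Sigma)\setminus I$; $\mathcal M$ is irreducible if the graph $(\Sigma,D)$ is connected. For $a\in\Sigma$, $\mathcal M^a=\langle\Sigma\setminus\{a\}\rangle$ is the submonoid generated by $\Sigma\setminus\{a\}$ (traces with no occurrence of $a$). A concurrent system is a triple $(\mathcal M,X,\bot)$ where $X$ is a finite set of states, $\bot\notin X$, and $\mathcal M$ acts on the right on $X\cup\{\bot\}$ (so $\alpha\cdot\varepsilon=\alpha$, $(\alpha\cdot x)\cdot y=\alpha\cdot(xy)$) with $\bot\cdot x=\bot$ for all $x$. A trace $x$ is an execution from $\alpha\in X$ if $\alpha\cdot x\neq\bot$. The system is accessible if for all $\alpha,\beta\in X$ there is $x$ with $\alpha\cdot x=\beta$; alive if for every $\alpha\in X$ and every $a\in\Sigma$ there is $x\in\mathcal M$ containing at least one occurrence of $a$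 with $\alpha\cdot x\neq\bot$; irreducible if it is accessible, alive, and $\mathcal M$ is irreducible. For $\alpha,\beta\in X$, let $\mathcal M_{\alpha,\beta}(n)=\{x\in\mathcal M:\ |x|=n,\ \alpha\cdot x=\beta\}$, $G_{\alpha,\beta}(z)=\sum_{n\ge0}\#\mathcal M_{\alpha,\beta}(n)z^n$ with radius of convergence $r_{\alpha,\beta}\in(0,+\infty]$. The characteristic root of the system is $r=\min_{\alpha,\beta\in X}r_{\alpha,\beta}$ (possibly $+\infty$). For $a\in\Sigma$, $(\mathcal M^a,X,\bot)$ is the concurrent system obtained by restricting the action to $\mathcal M^a$. *)

theory Defs
  imports "HOL-Analysis.Analysis"
begin

(* Traces over the finite alphabet 'a are represented as words modulo the
   trace equivalence generated by commuting adjacent independent letters. *)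

definition swap_step :: "('a \<times> 'a) set \<Rightarrow> ('a list \<times> 'a list) set" where
  "swap_step I = {(u @ [a, b] @ v, u @ [b, a] @ v) | u v a b. (a, b) \<in> I}"

definition trace_eq :: "('a \<times> 'a) set \<Rightarrow> ('a list \<times> 'a list) set" where
  "trace_eq I = (swap_step I \<union> (swap_step I)\<inverse>)\<^sup>*"

(* Right action of words on states; None plays the role of the sink \<bottom>. *)
fun run :: "('s \<Rightarrow> 'a \<Rightarrow> 's option) \<Rightarrow> 's \<Rightarrow> 'a list \<Rightarrow> 's option" where
  "run \<delta> \<alpha> [] = Some \<alpha>"
| "run \<delta> \<alpha> (a # w) = (case \<delta> \<alpha> a of None \<Rightarrow> None | Some \<beta> \<Rightarrow> run \<delta> \<beta> w)"

(* The letter action defines an action of the trace monoid M(Sigma,I). *)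
definition concurrent_system :: "('a \<times> 'a) set \<Rightarrow> ('s \<Rightarrow> 'a \<Rightarrow> 's option) \<Rightarrow> bool" where
  "concurrent_system I \<delta> \<longleftrightarrow> irrefl I \<and> sym I \<and>
     (\<forall>\<alpha> a b. (a, b) \<in> I \<longrightarrow> run \<delta> \<alpha> [a, b] = run \<delta> \<alpha> [b, a])"

definition traces_between ::
  "('a \<times> 'a) set \<Rightarrow> ('s \<Rightarrow> 'a \<Rightarrow> 's option) \<Rightarrow> 'a set \<Rightarrow> 's \<Rightarrow> 's \<Rightarrow> nat \<Rightarrow> 'a list set set" where
  "traces_between I \<delta> A \<alpha> \<beta> n =
     {w. set w \<subseteq> A \<and> length w = n \<and> run \<delta> \<alpha> w = Some \<beta>} // trace_eq I"

definition root_between ::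
  "('a \<times> 'a) set \<Rightarrow> ('s \<Rightarrow> 'a \<Rightarrow> 's option) \<Rightarrow> 'a set \<Rightarrow> 's \<Rightarrow> 's \<Rightarrow> ereal" where
  "root_between I \<delta> A \<alpha> \<beta> = conv_radius (\<lambda>n. real (card (traces_between I \<delta> A \<alpha> \<beta> n)))"

definition char_root ::
  "('a \<times> 'a) set \<Rightarrow> ('s::finite \<Rightarrow> 'a \<Rightarrow> 's option) \<Rightarrow> 'a set \<Rightarrow> ereal" where
  "char_root I \<delta> A = Min {root_between I \<delta> A \<alpha> \<beta> | \<alpha> \<beta>. True}"

definition accessible :: "('s \<Rightarrow> 'a \<Rightarrow> 's option) \<Rightarrow> bool" where
  "accessible \<delta> \<longleftrightarrow> (\<forall>\<alpha> \<beta>. \<exists>w. run \<delta> \<alpha> w = Some \<beta>)"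

definition alive :: "('s \<Rightarrow> 'a \<Rightarrow> 's option) \<Rightarrow> bool" where
  "alive \<delta> \<longleftrightarrow> (\<forall>\<alpha> a. \<exists>w. a \<in> set w \<and> run \<delta> \<alpha> w \<noteq> None)"

(* dependence graph (Sigma, D), D = complement of I, is connected *)
definition irreducible_monoid :: "('a \<times> 'a) set \<Rightarrow> bool" where
  "irreducible_monoid I \<longleftrightarrow> (\<forall>a b. (a, b) \<in> (- I)\<^sup>*)"

definition irreducible_system :: "('a \<times> 'a) set \<Rightarrow> ('s \<Rightarrow> 'a \<Rightarrow> 's option) \<Rightarrow> bool" where
  "irreducible_system I \<delta> \<longleftrightarrow> accessible \<delta> \<and> alive \<delta> \<and> irreducible_monoid I"

definition spectral_property :: "('a \<times> 'a) set \<Rightarrow> ('s::finite \<Rightarrow> 'a \<Rightarrow> 's option) \<Rightarrow> bool" where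
  "spectral_property I \<delta> \<longleftrightarrow>
     (\<forall>a. char_root I \<delta> (UNIV - {a}) > char_root I \<delta> UNIV)"

end

theory Submission
  imports Defs
begin

text \<open>
  Spectral property implies irreducibility. If no execution from a state \<open>\<alpha>\<close> contains the
  letter \<open>a\<close>, prefixing a path \<open>u\<close> from \<open>\<alpha>\<close> to \<open>\<gamma>\<close> embeds the traces from \<open>\<gamma>\<close> to \<open>\<beta>\<close> into the
  \<open>a\<close>-free traces from \<open>\<alpha>\<close> to \<open>\<beta>\<close> (traces are left cancellative), so \<open>r\<^sup>a \<le> r\<close>. If the
  dependence graph is disconnected, the letters \<open>A\<close> of one component commute with all others,
  every trace factors as \<open>x y\<close> with \<open>x\<close> over \<open>A\<close> and \<open>y\<close> over the complement, and the
  generating series are dominated by products of series missing a letter \<open>d \<notin> A\<close>, resp.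
  \<open>b \<in> A\<close>; hence \<open>r \<ge> min r\<^sup>d r\<^sup>b\<close>.

  Irreducibility implies the spectral property. Fix \<open>a\<close> and a path \<open>u\<close> from \<open>\<beta>\<close> to \<open>\<alpha>\<close> using every
  letter. In an irreducible trace monoid \<open>x u y\<close> determines \<open>x\<close> and \<open>y\<close> when \<open>x\<close> is \<open>a\<close>-free, so the
  coefficients \<open>c\<close> of \<open>G\<^sup>a\<^sub>\<alpha>\<^sub>\<beta>\<close> and \<open>g\<close> of \<open>G\<^sub>\<alpha>\<^sub>\<beta>\<close> satisfy the renewal inequality
  \<open>\<Sum>i\<le>N. c i * g (N - i) \<le> g (N + |u|)\<close>. Therefore \<open>G\<^sub>\<alpha>\<^sub>\<beta>\<close> diverges at every \<open>z\<close> below the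
  radius of \<open>G\<^sup>a\<^sub>\<alpha>\<^sub>\<beta>\<close> with \<open>z\<^bsup>|u|\<^esup> G\<^sup>a\<^sub>\<alpha>\<^sub>\<beta>(z) > 1\<close>. Such a \<open>z < r\<^sup>a\<close> exists: the matrix of the
  series \<open>G\<^sup>a\<close> is submultiplicative, and a submultiplicative series converging at a point
  converges beyond it, so some \<open>G\<^sup>a\<^sub>\<alpha>\<^sub>\<beta>\<close> diverges at \<open>r\<^sup>a\<close>.
\<close>

section \<open>Trace equivalence\<close>

lemma swap_stepI: "(a, b) \<in> I \<Longrightarrow> (u @ [a, b] @ v, u @ [b, a] @ v) \<in> swap_step I"
  unfolding swap_step_def by blast

lemma trace_eq_refl [simp]: "(w, w) \<in> trace_eq I"
  by (simp add: trace_eq_def)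

lemma trace_eq_sym: "(w, w') \<in> trace_eq I \<Longrightarrow> (w', w) \<in> trace_eq I"
  unfolding trace_eq_def by (metis converse_Un converse_converse rtrancl_converseI sup_commute)

lemma trace_eq_trans: "(u, v) \<in> trace_eq I \<Longrightarrow> (v, w) \<in> trace_eq I \<Longrightarrow> (u, w) \<in> trace_eq I"
  unfolding trace_eq_def by (rule rtrancl_trans)

lemma equiv_trace_eq: "equiv UNIV (trace_eq I)"
  by (rule equivI) (auto simp: refl_on_def sym_def trans_def intro: trace_eq_sym trace_eq_trans)

lemma trace_eq_context:
  assumes "(w, w') \<in> trace_eq I"
  shows "(u @ w @ v, u @ w' @ v) \<in> trace_eq I"
proof -
  have ctx: "(u @ w @ v, u @ w' @ v) \<in> swap_step I" if "(w, w') \<in> swap_step I" for w w'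
  proof -
    from that obtain p q a b where "w = p @ [a, b] @ q" "w' = p @ [b, a] @ q" "(a, b) \<in> I"
      unfolding swap_step_def by blast
    then show ?thesis using swap_stepI[of a b I "u @ p" "q @ v"] by simp
  qed
  from assms show ?thesis
    unfolding trace_eq_def
  proof (induction rule: rtrancl_induct)
    case (step y z)
    then show ?case using ctx by (blast intro: rtrancl_into_rtrancl)
  qed simp
qed

lemma trace_eq_append:
  "(w, w') \<in> trace_eq I \<Longrightarrow> (v, v') \<in> trace_eq I \<Longrightarrow> (w @ v, w' @ v') \<in> trace_eq I"
  using trace_eq_context[of w w' I "[]" v] trace_eq_context[of v v' I w' "[]"]
  by (auto intro: trace_eq_trans)

lemma trace_eq_Cons: "(w, w') \<in> trace_eq I \<Longrightarrow> (a # w, a # w') \<in> trace_eq I"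
  using trace_eq_append[of "[a]" "[a]"] by simp

lemma trace_eq_mset: "(w, w') \<in> trace_eq I \<Longrightarrow> mset w = mset w'"
  unfolding trace_eq_def
proof (induction rule: rtrancl_induct)
  case (step v v')
  then show ?case by (auto simp: swap_step_def)
qed simp

lemma run_append:
  "run \<delta> \<alpha> (u @ v) = (case run \<delta> \<alpha> u of None \<Rightarrow> None | Some \<beta> \<Rightarrow> run \<delta> \<beta> v)"
  by (induction u arbitrary: \<alpha>) (auto split: option.splits)

lemma run_append_Some: "run \<delta> \<alpha> u = Some \<beta> \<Longrightarrow> run \<delta> \<alpha> (u @ v) = run \<delta> \<beta> v"
  by (simp add: run_append)

lemma exists_run_covering:
  assumes "accessible \<delta>" "alive \<delta>" "finite L"
  shows "\<exists>u. L \<subseteq> set u \<and> run \<delta> \<beta> u = Some \<alpha>"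
  using assms(3)
proof (induction L arbitrary: \<beta>)
  case empty
  then show ?case using assms(1) unfolding accessible_def by blast
next
  case (insert c L)
  obtain w \<gamma> where "c \<in> set w" "run \<delta> \<beta> w = Some \<gamma>"
    using assms(2) unfolding alive_def by blast
  moreover obtain v where "L \<subseteq> set v" "run \<delta> \<gamma> v = Some \<alpha>"
    using insert.IH by blast
  ultimately show ?case by (intro exI[of _ "w @ v"]) (auto simp: run_append_Some)
qed

lemma trace_eq_run:
  assumes "concurrent_system I \<delta>" and "(w, w') \<in> trace_eq I"
  shows "run \<delta> \<alpha> w = run \<delta> \<alpha> w'"
proof -
  have swap: "run \<delta> \<alpha> v = run \<delta> \<alpha> v'" if "(v, v') \<in> swap_step I" for v v'
  proof -
    from that obtain p q a b where "v = p @ [a, b] @ q" "v' = p @ [b, a] @ q" "(a, b) \<in> I"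
      unfolding swap_step_def by blast
    moreover from \<open>(a, b) \<in> I\<close> assms(1) have "run \<delta> \<gamma> [a, b] = run \<delta> \<gamma> [b, a]" for \<gamma>
      unfolding concurrent_system_def by blast
    ultimately show ?thesis
      by (simp only: run_append[of _ _ p] run_append[of _ _ "[_, _]"])
  qed
  from assms(2) show ?thesis
    unfolding trace_eq_def by (induction rule: rtrancl_induct) (auto dest: swap)
qed

definition proj_pair :: "'a \<Rightarrow> 'a \<Rightarrow> 'a list \<Rightarrow> 'a list" where
  "proj_pair b c w = filter (\<lambda>x. x = b \<or> x = c) w"

lemma proj_pair_simps [simp]:
  "proj_pair b c [] = []"
  "proj_pair b c (x # w) = (if x = b \<or> x = c then x # proj_pair b c w else proj_pair b c w)"
  "proj_pair b c (w @ v) = proj_pair b c w @ proj_pair b c v"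
  by (auto simp: proj_pair_def)

lemma proj_pair_trace_eq:
  assumes "irrefl I" "sym I" "(b, c) \<notin> I" and "(w, w') \<in> trace_eq I"
  shows "proj_pair b c w = proj_pair b c w'"
proof -
  have swap: "proj_pair b c v = proj_pair b c v'" if "(v, v') \<in> swap_step I" for v v'
  proof -
    from that obtain p q x y where "v = p @ [x, y] @ q" "v' = p @ [y, x] @ q" "(x, y) \<in> I"
      unfolding swap_step_def by blast
    moreover from \<open>(x, y) \<in> I\<close> assms(1-3) have "\<not> (x \<in> {b, c} \<and> y \<in> {b, c})"
      by (auto simp: irrefl_def dest: symD)
    ultimately show ?thesis by auto
  qed
  from assms(4) show ?thesis
    unfolding trace_eq_def by (induction rule: rtrancl_induct) (auto dest: swap)
qed

lemma trace_eq_snoc_Cons: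
  assumes "\<forall>e \<in> set p. (e, b) \<in> I"
  shows "(p @ [b], b # p) \<in> trace_eq I"
  using assms
proof (induction p)
  case (Cons e p)
  then have "((e # p) @ [b], e # b # p) \<in> trace_eq I"
    by (simp add: trace_eq_Cons)
  moreover from Cons.prems have "(e # b # p, b # e # p) \<in> trace_eq I"
    using swap_stepI[of e b I "[]" p] unfolding trace_eq_def by auto
  ultimately show ?case by (rule trace_eq_trans)
qed simp

lemma proj_pair_eq_Cons_imp_split:
  assumes "irrefl I" and proj: "\<forall>b c. (b, c) \<notin> I \<longrightarrow> proj_pair b c (a # v) = proj_pair b c w"
  shows "\<exists>p q. w = p @ a # q \<and> (\<forall>e \<in> set p. (e, a) \<in> I)"
proof -
  have "(a, a) \<notin> I" using assms(1) by (auto simp: irrefl_def)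
  with proj have "a \<in> set (proj_pair a a w)" by (metis list.set_intros(1) proj_pair_simps(2))
  then have "a \<in> set w" by (simp add: proj_pair_def)
  then obtain p q where w: "w = p @ a # q" and "a \<notin> set p"
    using split_list_first by metis
  have "(e, a) \<in> I" if "e \<in> set p" for e
  proof (rule ccontr)
    assume "(e, a) \<notin> I"
    with proj have eq: "proj_pair e a (a # v) = proj_pair e a w" by blast
    obtain p1 p2 where p: "p = p1 @ e # p2" and "e \<notin> set p1"
      using split_list_first[OF \<open>e \<in> set p\<close>] by blast
    have "e \<noteq> a" "a \<notin> set p1" using \<open>a \<notin> set p\<close> \<open>e \<in> set p\<close> p by auto
    then have "proj_pair e a p1 = []"
      using \<open>e \<notin> set p1\<close> by (auto simp: proj_pair_def filter_empty_conv)
    then have "proj_pair e a w = e # proj_pair e a (p2 @ a # q)"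
      using w p by simp
    with eq \<open>e \<noteq> a\<close> show False by simp
  qed
  with w show ?thesis by blast
qed

lemma trace_eq_if_proj_pair_eq:
  assumes "irrefl I" "sym I" and "\<forall>b c. (b, c) \<notin> I \<longrightarrow> proj_pair b c w = proj_pair b c w'"
  shows "(w, w') \<in> trace_eq I"
  using assms(3)
proof (induction w arbitrary: w')
  case Nil
  have "w' = []"
  proof (rule ccontr)
    assume "w' \<noteq> []"
    then obtain e where "e \<in> set w'" by fastforce
    moreover have "(e, e) \<notin> I" using assms(1) by (auto simp: irrefl_def)
    with Nil have "proj_pair e e w' = []" by simp
    ultimately show False by (auto simp: proj_pair_def filter_empty_conv)
  qed
  then show ?case by simp
next
  case (Cons a v)
  obtain p q where w': "w' = p @ a # q" and indep: "\<forall>e \<in> set p. (e, a) \<in> I"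
    using proj_pair_eq_Cons_imp_split[OF assms(1) Cons.prems] by blast
  have front: "(w', a # p @ q) \<in> trace_eq I"
    using trace_eq_append[OF trace_eq_snoc_Cons[OF indep] trace_eq_refl[of q]] w' by simp
  have "\<forall>b c. (b, c) \<notin> I \<longrightarrow> proj_pair b c v = proj_pair b c (p @ q)"
  proof (intro allI impI)
    fix b c assume "(b, c) \<notin> I"
    with Cons.prems have "proj_pair b c (a # v) = proj_pair b c (a # p @ q)"
      using proj_pair_trace_eq[OF assms(1,2) \<open>(b, c) \<notin> I\<close> front] by simp
    then show "proj_pair b c v = proj_pair b c (p @ q)" by (simp split: if_splits)
  qed
  then have "(a # v, a # p @ q) \<in> trace_eq I"
    by (rule trace_eq_Cons[OF Cons.IH])
  then show ?case using trace_eq_sym[OF front] by (rule trace_eq_trans)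
qed

theorem trace_eq_iff_proj_pair:
  assumes "irrefl I" "sym I"
  shows "(w, w') \<in> trace_eq I \<longleftrightarrow> (\<forall>b c. (b, c) \<notin> I \<longrightarrow> proj_pair b c w = proj_pair b c w')"
  using proj_pair_trace_eq[OF assms] trace_eq_if_proj_pair_eq[OF assms] by blast

lemma trace_eq_append_cancel_left:
  assumes "irrefl I" "sym I" "(u @ w, u @ w') \<in> trace_eq I"
  shows "(w, w') \<in> trace_eq I"
  using assms by (simp add: trace_eq_iff_proj_pair)

lemma trace_eq_filter_split:
  assumes "sym I" and indep: "\<And>b c. b \<in> A \<Longrightarrow> c \<notin> A \<Longrightarrow> (b, c) \<in> I"
  shows "(w, filter (\<lambda>x. x \<in> A) w @ filter (\<lambda>x. x \<notin> A) w) \<in> trace_eq I"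
proof (induction w)
  case (Cons x w)
  let ?p = "filter (\<lambda>x. x \<in> A) w" and ?q = "filter (\<lambda>x. x \<notin> A) w"
  show ?case
  proof (cases "x \<in> A")
    case True
    then show ?thesis using trace_eq_Cons[OF Cons.IH] by simp
  next
    case False
    with indep have "(?p @ [x], x # ?p) \<in> trace_eq I"
      by (intro trace_eq_snoc_Cons) auto
    then have "(x # ?p @ ?q, ?p @ x # ?q) \<in> trace_eq I"
      using trace_eq_append[OF trace_eq_sym trace_eq_refl[of ?q]] by fastforce
    then show ?thesis
      using False trace_eq_trans[OF trace_eq_Cons[OF Cons.IH]] by auto
  qed
qed simp

text \<open>\<open>count_before b d k w\<close> counts the letters \<open>d\<close> preceding the \<open>(k+1)\<close>-st \<open>b\<close> in \<open>w\<close>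
  (all letters \<open>d\<close> if there is none).\<close>

fun count_before :: "'a \<Rightarrow> 'a \<Rightarrow> nat \<Rightarrow> 'a list \<Rightarrow> nat" where
  "count_before b d k [] = 0"
| "count_before b d k (e # w) =
    (if e = b then (if k = 0 then 0 else count_before b d (k - 1) w)
     else if e = d then Suc (count_before b d k w) else count_before b d k w)"

lemma count_before_proj_pair: "count_before b d k (proj_pair b d w) = count_before b d k w"
  by (induction w arbitrary: k) auto

lemma count_before_append:
  "b \<noteq> d \<Longrightarrow> count_before b d (count_list x b + j) (x @ v) = count_list x d + count_before b d j v"
  by (induction x arbitrary: j) auto

lemma count_before_append_mem: "b \<in> set u \<Longrightarrow> count_before b d 0 (u @ v) = count_before b d 0 u"
  by (induction u) auto

lemma count_list_eq_if_trace_eq_through_full_word: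
  assumes "irrefl I" "sym I" and conn: "irreducible_monoid I" and u: "set u = UNIV"
    and "a \<notin> set x" "a \<notin> set x'" and eq: "(x @ u @ y, x' @ u @ y') \<in> trace_eq I"
  shows "count_list x b = count_list x' b"
proof -
  from conn have "(a, b) \<in> (- I)\<^sup>*" unfolding irreducible_monoid_def by blast
  then show ?thesis
  proof (induction rule: rtrancl_induct)
    case base
    then show ?case using assms(5,6) by (simp add: count_list_0_iff)
  next
    case (step b d)
    show ?case
    proof (cases "b = d")
      case False
      \<comment> \<open>the \<open>(k+1)\<close>-st \<open>b\<close> lies in \<open>u\<close> on both sides, for \<open>k\<close> the common number of \<open>b\<close>s in \<open>x\<close>, \<open>x'\<close>\<close>
      have "b \<in> set u" using u by simp
      have "proj_pair b d (x @ u @ y) = proj_pair b d (x' @ u @ y')"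
        using proj_pair_trace_eq[OF assms(1,2) _ eq] step(2) by simp
      then have "count_before b d (count_list x b) (x @ u @ y)
          = count_before b d (count_list x' b) (x' @ u @ y')"
        using step.IH by (metis count_before_proj_pair)
      then show ?thesis
        using count_before_append[OF False, of _ 0] count_before_append_mem[OF \<open>b \<in> set u\<close>]
        by simp
    qed (use step.IH in simp)
  qed
qed

theorem trace_eq_full_word_cancel:
  assumes "irrefl I" "sym I" "irreducible_monoid I" "set u = UNIV"
    and "a \<notin> set x" "a \<notin> set x'" and eq: "(x @ u @ y, x' @ u @ y') \<in> trace_eq I"
  shows "(x, x') \<in> trace_eq I \<and> (y, y') \<in> trace_eq I"
proof -
  have "mset x = mset x'"
    using count_list_eq_if_trace_eq_through_full_word[OF assms] by (intro multiset_eqI) (simp add: count_mset)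
  have "proj_pair b c x = proj_pair b c x' \<and> proj_pair b c y = proj_pair b c y'"
    if "(b, c) \<notin> I" for b c
  proof -
    have "length (proj_pair b c x) = length (proj_pair b c x')"
      using \<open>mset x = mset x'\<close> unfolding proj_pair_def by (metis mset_filter size_mset)
    moreover have "proj_pair b c x @ proj_pair b c (u @ y) = proj_pair b c x' @ proj_pair b c (u @ y')"
      using proj_pair_trace_eq[OF assms(1,2) that eq] by simp
    ultimately show ?thesis by simp
  qed
  then show ?thesis using trace_eq_if_proj_pair_eq[OF assms(1,2)] by blast
qed

section \<open>Counting traces\<close>

definition quotient_rep :: "'a set \<Rightarrow> 'a set \<Rightarrow> 'a" where
  "quotient_rep W X = (SOME w. w \<in> X \<inter> W)"

lemma quotient_rep:
  assumes "equiv UNIV r" "X \<in> W // r"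
  shows "quotient_rep W X \<in> W" "X = r `` {quotient_rep W X}"
proof -
  from assms(2) obtain w where w: "w \<in> W" "X = r `` {w}" by (rule quotientE)
  with assms(1) have "w \<in> X \<inter> W" by (auto dest: equiv_class_self)
  then have rep: "quotient_rep W X \<in> X \<inter> W" unfolding quotient_rep_def by (rule someI)
  then show "quotient_rep W X \<in> W" by blast
  from rep w(2) have "(w, quotient_rep W X) \<in> r" by blast
  with w(2) show "X = r `` {quotient_rep W X}" using equiv_class_eq[OF assms(1)] by simp
qed

lemma card_quotient_le_card:
  assumes r: "equiv UNIV r" and "finite T" and "\<And>w. w \<in> W \<Longrightarrow> f w \<in> T"
    and inj: "\<And>w w'. w \<in> W \<Longrightarrow> w' \<in> W \<Longrightarrow> f w = f w' \<Longrightarrow> (w, w') \<in> r"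
  shows "card (W // r) \<le> card T"
proof (rule card_inj_on_le[of "\<lambda>X. f (quotient_rep W X)"])
  show "inj_on (\<lambda>X. f (quotient_rep W X)) (W // r)"
  proof (rule inj_onI)
    fix X Y assume "X \<in> W // r" "Y \<in> W // r" "f (quotient_rep W X) = f (quotient_rep W Y)"
    with inj have "(quotient_rep W X, quotient_rep W Y) \<in> r" by (simp add: quotient_rep[OF r])
    then show "X = Y"
      using quotient_rep(2)[OF r \<open>X \<in> W // r\<close>] quotient_rep(2)[OF r \<open>Y \<in> W // r\<close>]
      by (metis r equiv_class_eq)
  qed
  show "(\<lambda>X. f (quotient_rep W X)) ` (W // r) \<subseteq> T"
    using assms(3) quotient_rep(1)[OF r] by blast
qed fact

definition words_between :: "('s \<Rightarrow> 'a \<Rightarrow> 's option) \<Rightarrow> 'a set \<Rightarrow> 's \<Rightarrow> 's \<Rightarrow> nat \<Rightarrow> 'a list set" where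
  "words_between \<delta> A \<alpha> \<beta> n = {w. set w \<subseteq> A \<and> length w = n \<and> run \<delta> \<alpha> w = Some \<beta>}"

lemma traces_between_eq_quotient:
  "traces_between I \<delta> A \<alpha> \<beta> n = words_between \<delta> A \<alpha> \<beta> n // trace_eq I"
  by (simp add: traces_between_def words_between_def)

lemma trace_class_in_traces_between:
  "w \<in> words_between \<delta> A \<alpha> \<beta> n \<Longrightarrow> trace_eq I `` {w} \<in> traces_between I \<delta> A \<alpha> \<beta> n"
  by (simp add: traces_between_eq_quotient quotientI)

lemma trace_class_eq_iff: "trace_eq I `` {w} = trace_eq I `` {w'} \<longleftrightarrow> (w, w') \<in> trace_eq I"
  using equiv_class_eq_iff[OF equiv_trace_eq] by blast

lemma finite_words_between: "finite (words_between (\<delta> :: 's \<Rightarrow> 'a::finite \<Rightarrow> 's option) A \<alpha> \<beta> n)"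
  by (rule finite_subset[OF _ finite_lists_length_eq[of "UNIV :: 'a set" n]])
    (auto simp: words_between_def)

lemma finite_traces_between: "finite (traces_between I (\<delta> :: 's \<Rightarrow> 'a::finite \<Rightarrow> 's option) A \<alpha> \<beta> n)"
  unfolding traces_between_eq_quotient quotient_def by (intro finite_UN_I finite_words_between) auto

lemma card_traces_between_mono:
  "A \<subseteq> B \<Longrightarrow> card (traces_between I (\<delta> :: 's \<Rightarrow> 'a::finite \<Rightarrow> 's option) A \<alpha> \<beta> n)
    \<le> card (traces_between I \<delta> B \<alpha> \<beta> n)"
  by (intro card_mono finite_traces_between)
    (auto simp: traces_between_eq_quotient words_between_def quotient_def)

lemma card_traces_between_le_power:
  "card (traces_between I (\<delta> :: 's \<Rightarrow> 'a::finite \<Rightarrow> 's option) A \<alpha> \<beta> n) \<le> CARD('a) ^ n"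
proof -
  have "card (traces_between I \<delta> A \<alpha> \<beta> n) \<le> card {w. set w \<subseteq> (UNIV :: 'a set) \<and> length w = n}"
    unfolding traces_between_eq_quotient
    by (rule card_quotient_le_card[OF equiv_trace_eq, where f = id])
      (use finite_lists_length_eq[of "UNIV :: 'a set" n] in \<open>auto simp: words_between_def\<close>)
  then show ?thesis using card_lists_length_eq[of "UNIV :: 'a set" n] by simp
qed

lemma card_traces_between_add_le:
  fixes \<delta> :: "'s::finite \<Rightarrow> 'a::finite \<Rightarrow> 's option"
  shows "card (traces_between I \<delta> A \<alpha> \<beta> (n + k))
    \<le> (\<Sum>\<gamma>\<in>UNIV. card (traces_between I \<delta> A \<alpha> \<gamma> n) * card (traces_between I \<delta> A \<gamma> \<beta> k))"
proof -
  define T where "T = (SIGMA \<gamma>:UNIV. traces_between I \<delta> A \<alpha> \<gamma> n \<times> traces_between I \<delta> A \<gamma> \<beta> k)"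
  define f where "f w = (the (run \<delta> \<alpha> (take n w)), trace_eq I `` {take n w}, trace_eq I `` {drop n w})"
    for w
  have fT: "f w \<in> T" if "w \<in> words_between \<delta> A \<alpha> \<beta> (n + k)" for w
  proof -
    from that have "run \<delta> \<alpha> w = Some \<beta>" by (simp add: words_between_def)
    then obtain \<gamma> where "run \<delta> \<alpha> (take n w) = Some \<gamma>" "run \<delta> \<gamma> (drop n w) = Some \<beta>"
      using run_append[of \<delta> \<alpha> "take n w" "drop n w"] by (auto split: option.splits)
    with that show ?thesis
      unfolding f_def T_def using set_take_subset[of n w] set_drop_subset[of n w]
      by (auto simp: words_between_def intro!: trace_class_in_traces_between)
  qed
  have f_inj: "(w, w') \<in> trace_eq I" if "f w = f w'" for w w'
    using trace_eq_append[of "take n w" "take n w'" I "drop n w" "drop n w'"] that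
    by (simp add: f_def trace_class_eq_iff)
  have "card (traces_between I \<delta> A \<alpha> \<beta> (n + k)) \<le> card T"
    unfolding traces_between_eq_quotient[of _ _ _ _ _ "n + k"]
    by (rule card_quotient_le_card[OF equiv_trace_eq _ fT f_inj])
      (auto simp: T_def intro!: finite_SigmaI finite_cartesian_product finite_traces_between)
  also have "card T = (\<Sum>\<gamma>\<in>UNIV. card (traces_between I \<delta> A \<alpha> \<gamma> n) * card (traces_between I \<delta> A \<gamma> \<beta> k))"
    unfolding T_def by (simp add: card_SigmaI card_cartesian_product finite_traces_between)
  finally show ?thesis .
qed

lemma words_between_filter_split:
  assumes cs: "concurrent_system I \<delta>" and indep: "\<And>b c. b \<in> A \<Longrightarrow> c \<notin> A \<Longrightarrow> (b, c) \<in> I"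
    and w: "w \<in> words_between \<delta> UNIV \<alpha> \<beta> n"
  defines "p \<equiv> filter (\<lambda>x. x \<in> A) w" and "q \<equiv> filter (\<lambda>x. x \<notin> A) w"
  shows "p \<in> words_between \<delta> A \<alpha> (the (run \<delta> \<alpha> p)) (length p)"
    and "q \<in> words_between \<delta> (- A) (the (run \<delta> \<alpha> p)) \<beta> (n - length p)"
proof -
  have "sym I" using cs by (simp add: concurrent_system_def)
  with w have "run \<delta> \<alpha> (p @ q) = Some \<beta>"
    using trace_eq_run[OF cs trace_eq_filter_split[OF \<open>sym I\<close> indep, where w = w],
        where \<alpha> = \<alpha>, symmetric]
    by (simp add: words_between_def p_def q_def)
  then obtain \<gamma> where "run \<delta> \<alpha> p = Some \<gamma>" "run \<delta> \<gamma> q = Some \<beta>"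
    by (auto simp: run_append split: option.splits)
  moreover have "length p + length q = n"
    using w by (simp add: p_def q_def words_between_def sum_length_filter_compl)
  ultimately show "p \<in> words_between \<delta> A \<alpha> (the (run \<delta> \<alpha> p)) (length p)"
    and "q \<in> words_between \<delta> (- A) (the (run \<delta> \<alpha> p)) \<beta> (n - length p)"
    by (auto simp: words_between_def p_def q_def)
qed

lemma card_traces_between_le_split:
  fixes \<delta> :: "'s::finite \<Rightarrow> 'a::finite \<Rightarrow> 's option"
  assumes cs: "concurrent_system I \<delta>" and indep: "\<And>b c. b \<in> A \<Longrightarrow> c \<notin> A \<Longrightarrow> (b, c) \<in> I"
  shows "card (traces_between I \<delta> UNIV \<alpha> \<beta> n)
    \<le> (\<Sum>(\<gamma>, i)\<in>UNIV \<times> {..n}. card (traces_between I \<delta> A \<alpha> \<gamma> i)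
                               * card (traces_between I \<delta> (- A) \<gamma> \<beta> (n - i)))"
proof -
  have "sym I" using cs by (simp add: concurrent_system_def)
  define T where "T = (SIGMA (\<gamma>, i):UNIV \<times> {..n}.
    traces_between I \<delta> A \<alpha> \<gamma> i \<times> traces_between I \<delta> (- A) \<gamma> \<beta> (n - i))"
  define p where "p w = filter (\<lambda>x. x \<in> A) w" for w :: "'a list"
  define q where "q w = filter (\<lambda>x. x \<notin> A) w" for w :: "'a list"
  define f where "f w = ((the (run \<delta> \<alpha> (p w)), length (p w)),
    trace_eq I `` {p w}, trace_eq I `` {q w})" for w
  have fT: "f w \<in> T" if "w \<in> words_between \<delta> UNIV \<alpha> \<beta> n" for w
    using words_between_filter_split[where A = A, OF cs indep that] that length_filter_le[of _ w]
    by (simp add: f_def T_def p_def q_def trace_class_in_traces_between words_between_def)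
  have f_inj: "(w, w') \<in> trace_eq I" if "f w = f w'" for w w'
  proof -
    have split: "(v, p v @ q v) \<in> trace_eq I" for v
      unfolding p_def q_def using trace_eq_filter_split[OF \<open>sym I\<close> indep] by blast
    from that have "(p w @ q w, p w' @ q w') \<in> trace_eq I"
      by (intro trace_eq_append) (simp_all add: f_def trace_class_eq_iff)
    then show ?thesis
      using split[of w] split[of w'] by (meson trace_eq_sym trace_eq_trans)
  qed
  have "card (traces_between I \<delta> UNIV \<alpha> \<beta> n) \<le> card T"
    unfolding traces_between_eq_quotient[of _ _ UNIV]
    by (rule card_quotient_le_card[OF equiv_trace_eq _ fT f_inj])
      (auto simp: T_def intro!: finite_SigmaI finite_cartesian_product finite_traces_between)
  also have "card T = (\<Sum>(\<gamma>, i)\<in>UNIV \<times> {..n}. card (traces_between I \<delta> A \<alpha> \<gamma> i)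
                               * card (traces_between I \<delta> (- A) \<gamma> \<beta> (n - i)))"
    unfolding T_def
    by (subst card_SigmaI) (auto simp: card_cartesian_product finite_traces_between split_def)
  finally show ?thesis .
qed

lemma card_traces_between_le_prefix:
  fixes \<delta> :: "'s::finite \<Rightarrow> 'a::finite \<Rightarrow> 's option"
  assumes cs: "concurrent_system I \<delta>" and no_a: "\<forall>w. run \<delta> \<alpha> w \<noteq> None \<longrightarrow> a \<notin> set w"
    and u: "run \<delta> \<alpha> u = Some \<gamma>"
  shows "card (traces_between I \<delta> UNIV \<gamma> \<beta> n)
    \<le> card (traces_between I \<delta> (UNIV - {a}) \<alpha> \<beta> (n + length u))"
proof -
  have "irrefl I" "sym I" using cs by (simp_all add: concurrent_system_def)
  have "trace_eq I `` {u @ w} \<in> traces_between I \<delta> (UNIV - {a}) \<alpha> \<beta> (n + length u)"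
    if "w \<in> words_between \<delta> UNIV \<gamma> \<beta> n" for w
  proof -
    from that u have "run \<delta> \<alpha> (u @ w) = Some \<beta>" by (simp add: words_between_def run_append_Some)
    with that no_a[rule_format, of "u @ w"] show ?thesis
      by (intro trace_class_in_traces_between) (auto simp: words_between_def)
  qed
  moreover have "(w, w') \<in> trace_eq I"
    if "trace_eq I `` {u @ w} = trace_eq I `` {u @ w'}" for w w'
    using that trace_eq_append_cancel_left[OF \<open>irrefl I\<close> \<open>sym I\<close>] by (simp add: trace_class_eq_iff)
  ultimately show ?thesis
    unfolding traces_between_eq_quotient[of _ _ UNIV]
    by (intro card_quotient_le_card[OF equiv_trace_eq]) (simp_all add: finite_traces_between)
qed

lemma traces_between_rep:
  assumes "X \<in> traces_between I \<delta> A \<alpha> \<beta> n"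
  shows "quotient_rep (words_between \<delta> A \<alpha> \<beta> n) X \<in> words_between \<delta> A \<alpha> \<beta> n"
    and "X = trace_eq I `` {quotient_rep (words_between \<delta> A \<alpha> \<beta> n) X}"
  using quotient_rep[OF equiv_trace_eq assms[unfolded traces_between_eq_quotient]] by simp_all

lemma convolution_le_card_traces_between:
  fixes \<delta> :: "'s::finite \<Rightarrow> 'a::finite \<Rightarrow> 's option"
  assumes cs: "concurrent_system I \<delta>" and conn: "irreducible_monoid I"
    and u: "set u = UNIV" "run \<delta> \<beta> u = Some \<alpha>"
  shows "(\<Sum>i\<le>N. card (traces_between I \<delta> (UNIV - {a}) \<alpha> \<beta> i) * card (traces_between I \<delta> UNIV \<alpha> \<beta> (N - i)))
    \<le> card (traces_between I \<delta> UNIV \<alpha> \<beta> (N + length u))"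
proof -
  have "irrefl I" "sym I" using cs by (simp_all add: concurrent_system_def)
  define D where "D = (SIGMA i:{..N}.
    traces_between I \<delta> (UNIV - {a}) \<alpha> \<beta> i \<times> traces_between I \<delta> UNIV \<alpha> \<beta> (N - i))"
  define rep where "rep A n X = quotient_rep (words_between \<delta> A \<alpha> \<beta> n) X" for A n X
  define f where "f d = (case d of (i, X, Y) \<Rightarrow>
    trace_eq I `` {rep (UNIV - {a}) i X @ u @ rep UNIV (N - i) Y})" for d
  have "card D \<le> card (traces_between I \<delta> UNIV \<alpha> \<beta> (N + length u))"
  proof (rule card_inj_on_le[of f])
    show "f ` D \<subseteq> traces_between I \<delta> UNIV \<alpha> \<beta> (N + length u)"
      using u(2) by (auto simp: f_def D_def rep_def words_between_def run_append_Some
          dest!: traces_between_rep(1) intro!: trace_class_in_traces_between)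
    show "inj_on f D"
    proof (rule inj_onI)
      fix d d' assume "d \<in> D" "d' \<in> D" "f d = f d'"
      then obtain i X Y i' X' Y' where d: "d = (i, X, Y)" "d' = (i', X', Y')"
        and X: "X \<in> traces_between I \<delta> (UNIV - {a}) \<alpha> \<beta> i"
          "X' \<in> traces_between I \<delta> (UNIV - {a}) \<alpha> \<beta> i'"
        and Y: "Y \<in> traces_between I \<delta> UNIV \<alpha> \<beta> (N - i)" "Y' \<in> traces_between I \<delta> UNIV \<alpha> \<beta> (N - i')"
        by (cases d, cases d') (auto simp: D_def)
      have "(rep (UNIV - {a}) i X, rep (UNIV - {a}) i' X') \<in> trace_eq I \<and>
          (rep UNIV (N - i) Y, rep UNIV (N - i') Y') \<in> trace_eq I"
        using \<open>f d = f d'\<close> traces_between_rep(1)[OF X(1)] traces_between_rep(1)[OF X(2)]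
        by (intro trace_eq_full_word_cancel[OF \<open>irrefl I\<close> \<open>sym I\<close> conn u(1), of a])
          (auto simp: d f_def rep_def words_between_def trace_class_eq_iff)
      moreover from this have "i = i'"
        using traces_between_rep(1)[OF X(1)] traces_between_rep(1)[OF X(2)]
        by (auto simp: rep_def words_between_def dest!: trace_eq_mset mset_eq_length)
      ultimately show "d = d'"
        using d traces_between_rep(2)[OF X(1)] traces_between_rep(2)[OF X(2)]
          traces_between_rep(2)[OF Y(1)] traces_between_rep(2)[OF Y(2)]
        unfolding rep_def by (metis trace_class_eq_iff)
    qed
  qed (simp add: finite_traces_between)
  then show ?thesis
    unfolding D_def by (simp add: card_SigmaI card_cartesian_product finite_traces_between)
qed

section \<open>Power series with nonnegative coefficients\<close>

lemma conv_radius_antimono: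
  fixes c d :: "nat \<Rightarrow> 'a::{banach, real_normed_div_algebra}"
  assumes "\<And>n. norm (c n) \<le> norm (d n)"
  shows "conv_radius d \<le> conv_radius c"
proof (rule conv_radius_geI_ex')
  fix r :: real assume "0 < r" "ereal r < conv_radius d"
  then have "summable (\<lambda>n. norm (d n * of_real r ^ n))"
    by (intro abs_summable_in_conv_radius) simp
  then show "summable (\<lambda>n. c n * of_real r ^ n)"
    by (rule summable_comparison_test') (simp add: norm_mult assms mult_right_mono)
qed

lemma conv_radius_sum_ge:
  fixes f :: "'i \<Rightarrow> nat \<Rightarrow> 'a::{banach, real_normed_div_algebra}"
  assumes "finite S" "\<And>i. i \<in> S \<Longrightarrow> \<rho> \<le> conv_radius (f i)"
  shows "\<rho> \<le> conv_radius (\<lambda>n. \<Sum>i\<in>S. f i n)"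
  using assms
proof (induction S rule: finite_induct)
  case (insert i S)
  then have "\<rho> \<le> min (conv_radius (f i)) (conv_radius (\<lambda>n. \<Sum>i\<in>S. f i n))" by simp
  also have "\<dots> \<le> conv_radius (\<lambda>n. f i n + (\<Sum>i\<in>S. f i n))" by (rule conv_radius_add_ge)
  finally show ?case using insert.hyps by simp
qed simp

lemma summable_if_submultiplicative:
  fixes b :: "nat \<Rightarrow> real"
  assumes b0: "\<And>n. 0 \<le> b n" and sub: "\<And>n k. b (n + k) \<le> b n * b k"
    and p: "0 < p" "b p < 1"
  shows "summable b"
proof -
  define M where "M = (\<Sum>j<p. b j)"
  have iter: "b (k * p + j) \<le> b p ^ k * b j" for k j
  proof (induction k)
    case (Suc k)
    have "b (Suc k * p + j) \<le> b p * b (k * p + j)"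
      using sub[of p "k * p + j"] by (simp add: add.assoc)
    also have "\<dots> \<le> b p * (b p ^ k * b j)" using Suc b0 by (intro mult_left_mono)
    finally show ?case by (simp add: mult.assoc)
  qed simp
  have block: "(\<Sum>n\<in>{k * p..<k * p + p}. b n) \<le> b p ^ k * M" for k
  proof -
    have "(\<Sum>n\<in>{k * p..<k * p + p}. b n) = (\<Sum>j<p. b (k * p + j))"
      using sum.shift_bounds_nat_ivl[of b 0 "k * p" p] by (simp add: add.commute atLeast0LessThan)
    also have "\<dots> \<le> (\<Sum>j<p. b p ^ k * b j)" by (intro sum_mono iter)
    finally show ?thesis by (simp add: M_def sum_distrib_left)
  qed
  have "(\<Sum>n<N. b n) \<le> M / (1 - b p)" for N
  proof -
    have "(\<Sum>n<N. b n) \<le> (\<Sum>n<N * p. b n)"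
      using p(1) b0 by (intro sum_mono2) auto
    also have "\<dots> = (\<Sum>k<N. \<Sum>n\<in>{k * p..<k * p + p}. b n)" by (rule sum.nat_group[symmetric])
    also have "\<dots> \<le> (\<Sum>k<N. b p ^ k) * M" by (simp add: sum_distrib_right sum_mono block)
    also have "(\<Sum>k<N. b p ^ k) \<le> 1 / (1 - b p)"
      using sum_le_suminf[OF summable_geometric, of "b p" "{..<N}"] suminf_geometric[of "b p"]
        b0[of p] p(2) by simp
    then have "(\<Sum>k<N. b p ^ k) * M \<le> 1 / (1 - b p) * M"
      using b0 by (intro mult_right_mono) (auto simp: M_def sum_nonneg)
    finally show ?thesis by simp
  qed
  then show ?thesis by (intro summableI_nonneg_bounded b0)
qed

lemma conv_radius_gt_if_submultiplicative:
  fixes a :: "nat \<Rightarrow> real"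
  assumes a0: "\<And>n. 0 \<le> a n" and sub: "\<And>n k. a (n + k) \<le> a n * a k"
    and s: "0 < s" and sm: "summable (\<lambda>n. a n * s ^ n)"
  shows "ereal s < conv_radius a"
proof -
  from summable_LIMSEQ_zero[OF sm] have "eventually (\<lambda>n. a n * s ^ n < 1) sequentially"
    by (rule order_tendstoD) simp
  then obtain N where N: "\<And>n. n \<ge> N \<Longrightarrow> a n * s ^ n < 1"
    unfolding eventually_sequentially by blast
  define p where "p = Suc N"
  have p: "0 < p" "a p * s ^ p < 1" using N[of p] by (simp_all add: p_def)
  have "((\<lambda>y. a p * y ^ p) \<longlongrightarrow> a p * s ^ p) (at_right s)" by (intro tendsto_intros)
  from order_tendstoD(2)[OF this p(2)]
  have "eventually (\<lambda>y. s < y \<and> a p * y ^ p < 1) (at_right s)"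
    by (rule eventually_conj[OF eventually_at_right_less])
  then obtain z where z: "s < z" "a p * z ^ p < 1"
    using eventually_happens'[OF trivial_limit_at_right_real] by blast
  have "summable (\<lambda>n. a n * z ^ n)"
  proof (rule summable_if_submultiplicative[OF _ _ p(1)])
    fix n k
    have "a (n + k) * z ^ (n + k) \<le> (a n * a k) * z ^ (n + k)"
      using sub s z by (intro mult_right_mono) simp_all
    then show "a (n + k) * z ^ (n + k) \<le> a n * z ^ n * (a k * z ^ k)"
      by (simp add: power_add mult_ac)
  qed (use a0 s z in simp_all)
  then have "ereal z \<le> conv_radius a" using conv_radius_geI[of a z] s z by simp
  moreover have "ereal s < ereal z" using z by simp
  ultimately show ?thesis by (rule order_less_le_trans[rotated])
qed

lemma conv_radius_gt_if_submultiplicative_matrix: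
  fixes c :: "'s::finite \<Rightarrow> 's \<Rightarrow> nat \<Rightarrow> real"
  assumes c0: "\<And>\<alpha> \<beta> n. 0 \<le> c \<alpha> \<beta> n"
    and sub: "\<And>\<alpha> \<beta> n k. c \<alpha> \<beta> (n + k) \<le> (\<Sum>\<gamma>\<in>UNIV. c \<alpha> \<gamma> n * c \<gamma> \<beta> k)"
    and s: "0 < s" and sm: "\<And>\<alpha> \<beta>. summable (\<lambda>n. c \<alpha> \<beta> n * s ^ n)"
  shows "ereal s < conv_radius (c \<alpha> \<beta>)"
proof -
  define a where "a n = (\<Sum>\<alpha>\<in>UNIV. \<Sum>\<beta>\<in>UNIV. c \<alpha> \<beta> n)" for n
  have entry_le: "c \<alpha> \<beta> n \<le> a n" for \<alpha> \<beta> n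
  proof -
    have "c \<alpha> \<beta> n \<le> (\<Sum>\<beta>\<in>UNIV. c \<alpha> \<beta> n)" using c0 by (intro member_le_sum) auto
    also have "\<dots> \<le> a n" unfolding a_def using c0 by (intro member_le_sum sum_nonneg) auto
    finally show ?thesis .
  qed
  have "a (n + k) \<le> a n * a k" for n k
  proof -
    have "a (n + k) \<le> (\<Sum>\<alpha>\<in>UNIV. \<Sum>\<beta>\<in>UNIV. \<Sum>\<gamma>\<in>UNIV. c \<alpha> \<gamma> n * c \<gamma> \<beta> k)"
      unfolding a_def by (intro sum_mono sub)
    also have "\<dots> = (\<Sum>\<alpha>\<in>UNIV. \<Sum>\<gamma>\<in>UNIV. c \<alpha> \<gamma> n * (\<Sum>\<beta>\<in>UNIV. c \<gamma> \<beta> k))"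
      unfolding sum_distrib_left by (intro sum.cong refl sum.swap)
    also have "\<dots> \<le> (\<Sum>\<alpha>\<in>UNIV. \<Sum>\<gamma>\<in>UNIV. c \<alpha> \<gamma> n * a k)"
      unfolding a_def using c0 by (intro sum_mono mult_left_mono member_le_sum sum_nonneg) auto
    also have "\<dots> = a n * a k" by (simp add: a_def sum_distrib_right)
    finally show ?thesis .
  qed
  moreover have "summable (\<lambda>n. a n * s ^ n)"
    unfolding a_def sum_distrib_right by (intro summable_sum sm)
  ultimately have "ereal s < conv_radius a"
    using c0 s by (intro conv_radius_gt_if_submultiplicative) (auto simp: a_def sum_nonneg)
  also have "conv_radius a \<le> conv_radius (c \<alpha> \<beta>)"
    using c0 entry_le by (intro conv_radius_antimono) (auto intro: order_trans[OF _ abs_ge_self])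
  finally show ?thesis .
qed

lemma exists_lt_power_mult_suminf_gt_1:
  fixes c :: "nat \<Rightarrow> real"
  assumes c0: "\<And>n. 0 \<le> c n" and s: "0 < s" "ereal s \<le> conv_radius c"
    and diverges: "\<not> summable (\<lambda>n. c n * s ^ n)"
  shows "\<exists>z. 0 < z \<and> z < s \<and> 1 < z ^ m * (\<Sum>n. c n * z ^ n)"
proof -
  have "\<not> (\<forall>N. (\<Sum>n<N. c n * s ^ n) \<le> 1 / s ^ m)"
    using diverges summableI_nonneg_bounded[of "\<lambda>n. c n * s ^ n" "1 / s ^ m"] c0 s(1) by auto
  then obtain N where N: "1 / s ^ m < (\<Sum>n<N. c n * s ^ n)" by (auto simp: not_le)
  define P where "P y = y ^ m * (\<Sum>n<N. c n * y ^ n)" for y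
  have "1 < P s" using N s(1) by (simp add: P_def field_simps)
  moreover have "(P \<longlongrightarrow> P s) (at_left s)" unfolding P_def by (intro tendsto_intros)
  ultimately have "eventually (\<lambda>y. 1 < P y) (at_left s)" by (simp add: order_tendstoD(1))
  then obtain b where b: "b < s" "\<And>y. b < y \<Longrightarrow> y < s \<Longrightarrow> 1 < P y"
    unfolding eventually_at_left_field by blast
  define z where "z = (max b 0 + s) / 2"
  have z: "b < z" "0 < z" "z < s" using b(1) s(1) by (auto simp: z_def)
  have "ereal z < ereal s" using z(3) by simp
  also note s(2)
  finally have "summable (\<lambda>n. c n * z ^ n)"
    by (intro summable_in_conv_radius) (use z(2) in simp)
  then have "(\<Sum>n<N. c n * z ^ n) \<le> (\<Sum>n. c n * z ^ n)"
    using c0 z(2) by (intro sum_le_suminf) auto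
  then have "P z \<le> z ^ m * (\<Sum>n. c n * z ^ n)" unfolding P_def using z(2) by (simp add: mult_left_mono)
  with b(2)[OF z(1,3)] z show ?thesis by (intro exI[of _ z]) simp
qed

lemma powser_renewal_le:
  fixes c g :: "nat \<Rightarrow> real"
  assumes c0: "\<And>n. 0 \<le> c n" and g0: "\<And>n. 0 \<le> g n"
    and renewal: "\<And>N. (\<Sum>i\<le>N. c i * g (N - i)) \<le> g (N + m)"
    and z: "0 < z" and sc: "summable (\<lambda>n. c n * z ^ n)" and sg: "summable (\<lambda>n. g n * z ^ n)"
  shows "z ^ m * (\<Sum>n. c n * z ^ n) * (\<Sum>n. g n * z ^ n) \<le> (\<Sum>n. g n * z ^ n)"
proof -
  define C G where "C = (\<Sum>n. c n * z ^ n)" and "G = (\<Sum>n. g n * z ^ n)"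
  have "summable (\<lambda>n. norm (c n * z ^ n))" "summable (\<lambda>n. norm (g n * z ^ n))"
    using sc sg c0 g0 z by (simp_all add: abs_mult abs_of_nonneg)
  from Cauchy_product_sums[OF this]
  have "(\<lambda>N. \<Sum>i\<le>N. (c i * z ^ i) * (g (N - i) * z ^ (N - i))) sums (C * G)"
    by (simp add: C_def G_def)
  moreover have "(\<Sum>i\<le>N. (c i * z ^ i) * (g (N - i) * z ^ (N - i)))
      = (\<Sum>i\<le>N. c i * g (N - i)) * z ^ N" for N
    unfolding sum_distrib_right by (intro sum.cong) (auto simp: mult_ac simp flip: power_add)
  ultimately have lhs: "(\<lambda>N. (\<Sum>i\<le>N. c i * g (N - i)) * z ^ N * z ^ m) sums (C * G * z ^ m)"
    by (simp add: sums_mult2)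
  have rhs: "(\<lambda>N. g (N + m) * z ^ (N + m)) sums (\<Sum>N. g (N + m) * z ^ (N + m))"
    using sg by (intro summable_sums summable_ignore_initial_segment)
  have "(\<Sum>i\<le>N. c i * g (N - i)) * z ^ N * z ^ m \<le> g (N + m) * z ^ (N + m)" for N
    using mult_right_mono[OF renewal[of N], of "z ^ (N + m)"] z by (simp add: power_add mult_ac)
  then have "C * G * z ^ m \<le> (\<Sum>N. g (N + m) * z ^ (N + m))"
    using lhs rhs by (rule sums_le)
  also have "\<dots> \<le> G"
    using suminf_split_initial_segment[OF sg, of m] g0 z by (simp add: G_def sum_nonneg)
  finally show ?thesis by (simp add: C_def G_def mult_ac)
qed

lemma conv_radius_le_if_renewal:
  fixes c g :: "nat \<Rightarrow> real"
  assumes c0: "\<And>n. 0 \<le> c n" and cg: "\<And>n. c n \<le> g n"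
    and renewal: "\<And>N. (\<Sum>i\<le>N. c i * g (N - i)) \<le> g (N + m)"
    and z: "0 < z" "ereal z < conv_radius c" and gt_1: "1 < z ^ m * (\<Sum>n. c n * z ^ n)"
  shows "conv_radius g \<le> ereal z"
proof -
  have "\<not> summable (\<lambda>n. g n * z ^ n)"
  proof
    assume sg: "summable (\<lambda>n. g n * z ^ n)"
    have g0: "0 \<le> g n" for n using c0[of n] cg[of n] by linarith
    have sc: "summable (\<lambda>n. c n * z ^ n)" using z by (intro summable_in_conv_radius) simp
    have "\<exists>n. 0 < c n * z ^ n"
    proof (rule ccontr)
      assume "\<nexists>n. 0 < c n * z ^ n"
      moreover have "0 \<le> c n * z ^ n" for n using c0 z(1) by simp
      ultimately have zero: "c n * z ^ n = 0" for n by (meson not_less order.antisym)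
      from gt_1 show False unfolding zero by simp
    qed
    then obtain n where "0 < c n * z ^ n" by blast
    then have "0 < (\<Sum>n. g n * z ^ n)"
      using sg g0 z(1) cg[of n]
      by (intro suminf_pos2[of _ n]) (auto intro: order_less_le_trans mult_right_mono)
    with powser_renewal_le[OF c0 g0 renewal z(1) sc sg] gt_1 show False by simp
  qed
  then show ?thesis using conv_radius_leI'[of g z] z(1) by simp
qed

section \<open>Characteristic roots\<close>

lemma finite_root_betweens:
  "finite {root_between I (\<delta> :: 's::finite \<Rightarrow> 'a \<Rightarrow> 's option) A \<alpha> \<beta> | \<alpha> \<beta>. True}"
proof -
  have "{root_between I \<delta> A \<alpha> \<beta> | \<alpha> \<beta>. True} \<subseteq> (\<lambda>(\<alpha>, \<beta>). root_between I \<delta> A \<alpha> \<beta>) ` UNIV"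
    by auto
  then show ?thesis by (rule finite_subset) simp
qed

lemma char_root_le_root_between: "char_root I \<delta> A \<le> root_between I \<delta> A \<alpha> \<beta>"
  unfolding char_root_def by (rule Min_le[OF finite_root_betweens]) auto

lemma char_root_attained: "\<exists>\<alpha> \<beta>. char_root I \<delta> A = root_between I \<delta> A \<alpha> \<beta>"
proof -
  have "char_root I \<delta> A \<in> {root_between I \<delta> A \<alpha> \<beta> | \<alpha> \<beta>. True}"
    unfolding char_root_def by (rule Min_in[OF finite_root_betweens]) auto
  then show ?thesis by blast
qed

lemma root_between_antimono:
  "A \<subseteq> B \<Longrightarrow> root_between I (\<delta> :: 's \<Rightarrow> 'a::finite \<Rightarrow> 's option) B \<alpha> \<beta> \<le> root_between I \<delta> A \<alpha> \<beta>"
  unfolding root_between_def by (intro conv_radius_antimono) (simp add: card_traces_between_mono)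

lemma root_between_pos: "0 < root_between I (\<delta> :: 's \<Rightarrow> 'a::finite \<Rightarrow> 's option) A \<alpha> \<beta>"
proof -
  define z where "z = 1 / (2 * real CARD('a))"
  have z: "0 < z" "real CARD('a) * z = 1 / 2" by (simp_all add: z_def)
  have "summable (\<lambda>n. real (card (traces_between I \<delta> A \<alpha> \<beta> n)) * z ^ n)"
  proof (rule summable_comparison_test'[OF summable_geometric[of "1 / 2"]])
    fix n
    have "real (card (traces_between I \<delta> A \<alpha> \<beta> n)) * z ^ n \<le> real CARD('a) ^ n * z ^ n"
      using card_traces_between_le_power z(1) by (intro mult_right_mono) (simp_all flip: of_nat_power)
    then show "norm (real (card (traces_between I \<delta> A \<alpha> \<beta> n)) * z ^ n) \<le> (1 / 2) ^ n"
      using z by (simp flip: power_mult_distrib)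
  qed simp
  then have "ereal z \<le> root_between I \<delta> A \<alpha> \<beta>"
    unfolding root_between_def using conv_radius_geI z(1) by fastforce
  moreover have "0 < ereal z" using z(1) by simp
  ultimately show ?thesis by (rule order_less_le_trans[rotated])
qed

lemma char_root_pos: "0 < char_root I (\<delta> :: 's::finite \<Rightarrow> 'a::finite \<Rightarrow> 's option) A"
  using char_root_attained root_between_pos by metis

lemma alive_if_spectral_property:
  fixes I :: "('a::finite \<times> 'a) set" and \<delta> :: "'s::finite \<Rightarrow> 'a \<Rightarrow> 's option"
  assumes cs: "concurrent_system I \<delta>" and "accessible \<delta>" and "spectral_property I \<delta>"
  shows "alive \<delta>"
proof (rule ccontr)
  assume "\<not> alive \<delta>"
  then obtain \<alpha> a where no_a: "\<forall>w. run \<delta> \<alpha> w \<noteq> None \<longrightarrow> a \<notin> set w"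
    unfolding alive_def by blast
  obtain \<gamma> \<beta> where root: "char_root I \<delta> UNIV = root_between I \<delta> UNIV \<gamma> \<beta>"
    using char_root_attained by blast
  obtain u where u: "run \<delta> \<alpha> u = Some \<gamma>" using \<open>accessible \<delta>\<close> unfolding accessible_def by blast
  have "char_root I \<delta> (UNIV - {a}) \<le> root_between I \<delta> (UNIV - {a}) \<alpha> \<beta>"
    by (rule char_root_le_root_between)
  also have "\<dots> = conv_radius (\<lambda>n. real (card (traces_between I \<delta> (UNIV - {a}) \<alpha> \<beta> (n + length u))))"
    using conv_radius_shift[of "\<lambda>n. real (card (traces_between I \<delta> (UNIV - {a}) \<alpha> \<beta> n))" "length u"]
    by (simp add: root_between_def)
  also have "\<dots> \<le> char_root I \<delta> UNIV"
    unfolding root root_between_def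
    by (intro conv_radius_antimono) (simp add: card_traces_between_le_prefix[OF cs no_a u])
  finally show False
    using \<open>spectral_property I \<delta>\<close> by (simp add: spectral_property_def not_le[symmetric])
qed

lemma root_between_ge_if_split:
  fixes \<delta> :: "'s::finite \<Rightarrow> 'a::finite \<Rightarrow> 's option"
  assumes cs: "concurrent_system I \<delta>" and indep: "\<And>b c. b \<in> A \<Longrightarrow> c \<notin> A \<Longrightarrow> (b, c) \<in> I"
    and first: "\<And>\<gamma>. \<rho> \<le> root_between I \<delta> A \<alpha> \<gamma>"
    and second: "\<And>\<gamma>. \<rho> \<le> root_between I \<delta> (- A) \<gamma> \<beta>"
  shows "\<rho> \<le> root_between I \<delta> UNIV \<alpha> \<beta>"
proof -
  define f where "f \<gamma> i = real (card (traces_between I \<delta> A \<alpha> \<gamma> i))" for \<gamma> i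
  define g where "g \<gamma> i = real (card (traces_between I \<delta> (- A) \<gamma> \<beta> i))" for \<gamma> i
  have "\<rho> \<le> conv_radius (\<lambda>n. \<Sum>\<gamma>\<in>UNIV. \<Sum>i\<le>n. f \<gamma> i * g \<gamma> (n - i))"
  proof (rule conv_radius_sum_ge)
    fix \<gamma>
    have "\<rho> \<le> min (conv_radius (f \<gamma>)) (conv_radius (g \<gamma>))"
      using first[of \<gamma>] second[of \<gamma>] by (simp add: f_def g_def root_between_def)
    also have "\<dots> \<le> conv_radius (\<lambda>n. \<Sum>i\<le>n. f \<gamma> i * g \<gamma> (n - i))" by (rule conv_radius_mult_ge)
    finally show "\<rho> \<le> conv_radius (\<lambda>n. \<Sum>i\<le>n. f \<gamma> i * g \<gamma> (n - i))" .
  qed simp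
  also have "\<dots> \<le> root_between I \<delta> UNIV \<alpha> \<beta>"
    unfolding root_between_def
  proof (rule conv_radius_antimono)
    fix n
    have "real (card (traces_between I \<delta> UNIV \<alpha> \<beta> n)) \<le> (\<Sum>(\<gamma>, i)\<in>UNIV \<times> {..n}. f \<gamma> i * g \<gamma> (n - i))"
      using of_nat_mono[OF card_traces_between_le_split[OF cs indep]]
      by (simp add: f_def g_def case_prod_beta)
    then show "norm (real (card (traces_between I \<delta> UNIV \<alpha> \<beta> n)))
        \<le> norm (\<Sum>\<gamma>\<in>UNIV. \<Sum>i\<le>n. f \<gamma> i * g \<gamma> (n - i))"
      by (simp add: sum.cartesian_product f_def g_def sum_nonneg)
  qed
  finally show ?thesis .
qed

lemma irreducible_monoid_if_spectral_property:
  fixes I :: "('a::finite \<times> 'a) set" and \<delta> :: "'s::finite \<Rightarrow> 'a \<Rightarrow> 's option"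
  assumes cs: "concurrent_system I \<delta>" and sp: "spectral_property I \<delta>"
  shows "irreducible_monoid I"
proof (rule ccontr)
  assume "\<not> irreducible_monoid I"
  then obtain b d where "(b, d) \<notin> (- I)\<^sup>*" unfolding irreducible_monoid_def by blast
  define A where "A = {c. (b, c) \<in> (- I)\<^sup>*}"
  have indep: "(x, y) \<in> I" if "x \<in> A" "y \<notin> A" for x y
    using that rtrancl_into_rtrancl[of b x "- I" y] by (auto simp: A_def)
  have "b \<in> A" "d \<notin> A" using \<open>(b, d) \<notin> (- I)\<^sup>*\<close> by (simp_all add: A_def)
  define \<rho> where "\<rho> = min (char_root I \<delta> (UNIV - {d})) (char_root I \<delta> (UNIV - {b}))"
  have "A \<subseteq> UNIV - {d}" "- A \<subseteq> UNIV - {b}" using \<open>b \<in> A\<close> \<open>d \<notin> A\<close> by auto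
  have "\<rho> \<le> root_between I \<delta> UNIV \<alpha> \<beta>" for \<alpha> \<beta>
  proof (rule root_between_ge_if_split[OF cs indep])
    fix \<gamma>
    have "\<rho> \<le> char_root I \<delta> (UNIV - {d})" by (simp add: \<rho>_def)
    also have "\<dots> \<le> root_between I \<delta> (UNIV - {d}) \<alpha> \<gamma>" by (rule char_root_le_root_between)
    also have "\<dots> \<le> root_between I \<delta> A \<alpha> \<gamma>" using \<open>A \<subseteq> UNIV - {d}\<close> by (rule root_between_antimono)
    finally show "\<rho> \<le> root_between I \<delta> A \<alpha> \<gamma>" .
    have "\<rho> \<le> char_root I \<delta> (UNIV - {b})" by (simp add: \<rho>_def)
    also have "\<dots> \<le> root_between I \<delta> (UNIV - {b}) \<gamma> \<beta>" by (rule char_root_le_root_between)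
    also have "\<dots> \<le> root_between I \<delta> (- A) \<gamma> \<beta>" using \<open>- A \<subseteq> UNIV - {b}\<close> by (rule root_between_antimono)
    finally show "\<rho> \<le> root_between I \<delta> (- A) \<gamma> \<beta>" .
  qed
  moreover obtain \<alpha> \<beta> where "char_root I \<delta> UNIV = root_between I \<delta> UNIV \<alpha> \<beta>"
    using char_root_attained by blast
  moreover have "char_root I \<delta> UNIV < \<rho>"
    using sp unfolding spectral_property_def \<rho>_def by simp
  ultimately show False by (metis not_le)
qed

lemma root_between_le_if_renewal:
  fixes I :: "('a::finite \<times> 'a) set" and \<delta> :: "'s::finite \<Rightarrow> 'a \<Rightarrow> 's option"
  assumes cs: "concurrent_system I \<delta>" and conn: "irreducible_monoid I"
    and u: "set u = UNIV" "run \<delta> \<beta> u = Some \<alpha>"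
    and z: "0 < z" "ereal z < root_between I \<delta> (UNIV - {a}) \<alpha> \<beta>"
    and gt_1: "1 < z ^ length u * (\<Sum>n. real (card (traces_between I \<delta> (UNIV - {a}) \<alpha> \<beta> n)) * z ^ n)"
  shows "root_between I \<delta> UNIV \<alpha> \<beta> \<le> ereal z"
  unfolding root_between_def
proof (rule conv_radius_le_if_renewal[OF _ _ _ z(1) _ gt_1])
  show "real (card (traces_between I \<delta> (UNIV - {a}) \<alpha> \<beta> n))
      \<le> real (card (traces_between I \<delta> UNIV \<alpha> \<beta> n))" for n
    by (simp add: card_traces_between_mono)
  show "(\<Sum>i\<le>N. real (card (traces_between I \<delta> (UNIV - {a}) \<alpha> \<beta> i))
        * real (card (traces_between I \<delta> UNIV \<alpha> \<beta> (N - i))))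
      \<le> real (card (traces_between I \<delta> UNIV \<alpha> \<beta> (N + length u)))" for N
    using of_nat_mono[OF convolution_le_card_traces_between[OF cs conn u]] by simp
qed (use z(2) in \<open>simp_all add: root_between_def\<close>)

lemma root_between_le_2_if_char_root_infinite:
  fixes I :: "('a::finite \<times> 'a) set" and \<delta> :: "'s::finite \<Rightarrow> 'a \<Rightarrow> 's option"
  assumes cs: "concurrent_system I \<delta>" and "accessible \<delta>" "alive \<delta>" "irreducible_monoid I"
    and root_inf: "char_root I \<delta> (UNIV - {a}) = \<infinity>"
  shows "root_between I \<delta> UNIV \<alpha> \<alpha> \<le> ereal 2"
proof -
  define c where "c n = real (card (traces_between I \<delta> (UNIV - {a}) \<alpha> \<alpha> n))" for n
  obtain u where u: "set u = UNIV" "run \<delta> \<alpha> u = Some \<alpha>"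
    using exists_run_covering[OF assms(2,3) finite, of UNIV \<alpha> \<alpha>] by auto
  then have "2 \<le> (2::real) ^ length u" by (cases u) auto
  have "[] \<in> words_between \<delta> (UNIV - {a}) \<alpha> \<alpha> 0" by (simp add: words_between_def)
  then have "trace_eq I `` {[]} \<in> traces_between I \<delta> (UNIV - {a}) \<alpha> \<alpha> 0"
    by (rule trace_class_in_traces_between)
  then have "1 \<le> c 0"
    unfolding c_def using finite_traces_between by (auto simp: Suc_le_eq card_gt_0_iff)
  have radius: "ereal 2 < root_between I \<delta> (UNIV - {a}) \<alpha> \<alpha>"
    using char_root_le_root_between[of I \<delta> "UNIV - {a}" \<alpha> \<alpha>] root_inf by simp
  then have "summable (\<lambda>n. c n * 2 ^ n)"
    by (intro summable_in_conv_radius) (simp add: c_def root_between_def)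
  then have "c 0 \<le> (\<Sum>n. c n * 2 ^ n)"
    using sum_le_suminf[of "\<lambda>n. c n * 2 ^ n" "{0}"] by (simp add: c_def)
  then have "2 * 1 \<le> 2 ^ length u * (\<Sum>n. c n * 2 ^ n)"
    using \<open>1 \<le> c 0\<close> \<open>2 \<le> 2 ^ length u\<close> by (intro mult_mono) simp_all
  then show ?thesis
    using root_between_le_if_renewal[OF cs assms(4) u _ radius] by (simp add: c_def)
qed

lemma exists_root_between_le_below_finite_char_root:
  fixes I :: "('a::finite \<times> 'a) set" and \<delta> :: "'s::finite \<Rightarrow> 'a \<Rightarrow> 's option"
  assumes cs: "concurrent_system I \<delta>" and "accessible \<delta>" "alive \<delta>" "irreducible_monoid I"
    and root_s: "char_root I \<delta> (UNIV - {a}) = ereal s"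
  shows "\<exists>\<alpha> \<beta> z. z < s \<and> root_between I \<delta> UNIV \<alpha> \<beta> \<le> ereal z"
proof -
  define c where "c \<alpha> \<beta> n = real (card (traces_between I \<delta> (UNIV - {a}) \<alpha> \<beta> n))" for \<alpha> \<beta> n
  have s: "0 < s" using char_root_pos[of I \<delta> "UNIV - {a}"] root_s by simp
  have radius: "ereal s \<le> conv_radius (c \<alpha> \<beta>)" for \<alpha> \<beta>
    using char_root_le_root_between[of I \<delta> "UNIV - {a}" \<alpha> \<beta>] root_s
    by (simp add: c_def root_between_def)
  \<comment> \<open>the characteristic root is attained, so by submultiplicativity some series diverges there\<close>
  have "\<exists>\<alpha> \<beta>. \<not> summable (\<lambda>n. c \<alpha> \<beta> n * s ^ n)"
  proof (rule ccontr)
    assume "\<nexists>\<alpha> \<beta>. \<not> summable (\<lambda>n. c \<alpha> \<beta> n * s ^ n)"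
    moreover have "c \<alpha> \<beta> (n + k) \<le> (\<Sum>\<gamma>\<in>UNIV. c \<alpha> \<gamma> n * c \<gamma> \<beta> k)" for \<alpha> \<beta> n k
      using of_nat_mono[OF card_traces_between_add_le] by (simp add: c_def)
    ultimately have beyond: "ereal s < conv_radius (c \<alpha> \<beta>)" for \<alpha> \<beta>
      using s by (intro conv_radius_gt_if_submultiplicative_matrix) (auto simp: c_def)
    obtain \<alpha> \<beta> where "char_root I \<delta> (UNIV - {a}) = root_between I \<delta> (UNIV - {a}) \<alpha> \<beta>"
      using char_root_attained by blast
    with root_s have "ereal s = conv_radius (c \<alpha> \<beta>)" by (simp add: c_def root_between_def)
    with beyond[of \<alpha> \<beta>] show False by simp
  qed
  then obtain \<alpha> \<beta> where diverges: "\<not> summable (\<lambda>n. c \<alpha> \<beta> n * s ^ n)" by blast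
  obtain u where u: "UNIV \<subseteq> set u" "run \<delta> \<beta> u = Some \<alpha>"
    using exists_run_covering[OF assms(2,3) finite] by blast
  obtain z where z: "0 < z" "z < s" "1 < z ^ length u * (\<Sum>n. c \<alpha> \<beta> n * z ^ n)"
    using exists_lt_power_mult_suminf_gt_1[OF _ s radius diverges] by (auto simp: c_def)
  have "ereal z < ereal s" using z(2) by simp
  also note radius[of \<alpha> \<beta>]
  finally have "ereal z < root_between I \<delta> (UNIV - {a}) \<alpha> \<beta>"
    by (simp add: c_def root_between_def)
  with u z show ?thesis
    by (intro exI root_between_le_if_renewal[OF cs assms(4)] conjI) (auto simp: c_def)
qed

lemma spectral_property_if_irreducible:
  fixes I :: "('a::finite \<times> 'a) set" and \<delta> :: "'s::finite \<Rightarrow> 'a \<Rightarrow> 's option"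
  assumes "concurrent_system I \<delta>" "accessible \<delta>" "alive \<delta>" "irreducible_monoid I"
  shows "spectral_property I \<delta>"
  unfolding spectral_property_def
proof
  fix a
  have "\<exists>\<alpha> \<beta> z. ereal z < char_root I \<delta> (UNIV - {a}) \<and> root_between I \<delta> UNIV \<alpha> \<beta> \<le> ereal z"
  proof (cases "char_root I \<delta> (UNIV - {a})")
    case (real s)
    then show ?thesis using exists_root_between_le_below_finite_char_root[OF assms real] by auto
  next
    case PInf
    then show ?thesis using root_between_le_2_if_char_root_infinite[OF assms PInf] by auto
  next
    case MInf
    then show ?thesis using char_root_pos[of I \<delta> "UNIV - {a}"] by simp
  qed
  then show "char_root I \<delta> UNIV < char_root I \<delta> (UNIV - {a})"
    using char_root_le_root_between by (meson order_le_less_trans)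
qed

theorem theorem1:
  fixes I :: "('a::finite \<times> 'a) set" and \<delta> :: "'s::finite \<Rightarrow> 'a \<Rightarrow> 's option"
  assumes "concurrent_system I \<delta>"
    and "accessible \<delta>"
  shows "irreducible_system I \<delta> \<longleftrightarrow> spectral_property I \<delta>"
  using spectral_property_if_irreducible[OF assms] alive_if_spectral_property[OF assms]
    irreducible_monoid_if_spectral_property[OF assms(1)] assms(2)
  unfolding irreducible_system_def by blast

end
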